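(* Let $\alpha,\beta$ be positive integers and $\underline n=(n_1,\dots,n_d)$ a tuple of positive integers. Suppose the graph $\mathcal{G}^{\alpha,\beta}_{\underline n}$ contains a Hamiltonian cycle which contains two $\alpha$-sites and two $\beta$-sites whose supports are pairwise disjoint. Let $k\geq \alpha+\beta-1$ be an integer and $\underline m=(n_1,\dots,n_d,k)$. Then $\mathcal{G}^{\alpha,\beta}_{\underline m}$ contains a Hamiltonian cycle which contains two $\alpha$-sites and two $\beta$-sites whose supports are pairwise disjoint.
   Context: For a tuple $\underline n=(n_1,\dots,n_d)$, the board is $\mathcal{B}_{\underline n}=\{1,\dots,n_1\}\times\cdots\times\{1,\dots,n_d\}$. Let $\mathcal{C}^{\alpha,\beta}_d$ be the set of vectors in $\mathbb{Z}^d$ with exactly $d-2$ coordinates equal to $0$, exactly one coordinate in $\{\pm\alpha\}$ and exactly one coordinate in $\{\pm\beta\}$. The graph $\mathcal{G}^{\alpha,\beta}_{\underline n}$ has vertex set $\mathcal{B}_{\underline n}$ with $a,b$ adjacent iff $a-b\in\mathcal{C}^{\alpha,\beta}_d$. Let $(e_j)$ be the standard basis of $\mathbb{R}^d$. For a Hamiltonian cycle $(a^i)_{i\in I}$, $I=\{1,\dots,N\}$, indices mod $N$: a well-oriented $\alpha$-site is a quadruple $(a^n,a^{n+1},a^m,a^{m+1})$ with $n,m\in I$ such that for some $j$, $a^{n+1}-a^m=\pm(a^{m+1}-a^n)\in\{-\alpha e_j,\alpha e_j\}$; a non-well-oriented $\alpha$-site is a quadruple $(a^n,a^{n+1},a^{m+1},a^m)$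 such that for some $j$, $a^n-a^m=\pm(a^{m+1}-a^{n+1})\in\{-\alpha e_j,\alpha e_j\}$. An $\alpha$-site is either of these; $\beta$-sites are defined in the same way with $\beta$ in place of $\alpha$. The support of a site is the set $\{a^n,a^{n+1},a^m,a^{m+1}\}$. *)

theory Defs
  imports Main
begin

(* Points of Z^d are int lists of length d; a tuple n = (n_1,...,n_d) is a nat list. *)

definition board :: "nat list \<Rightarrow> int list set" where
  "board ns = {a. length a = length ns \<and>
                  (\<forall>i<length ns. 1 \<le> a ! i \<and> a ! i \<le> int (ns ! i))}"

definition vdiff :: "int list \<Rightarrow> int list \<Rightarrow> int list" where
  "vdiff a b = map2 (-) a b"

definition vscale :: "int \<Rightarrow> int list \<Rightarrow> int list" where
  "vscale s v = map ((*) s) v"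

definition unitv :: "nat \<Rightarrow> nat \<Rightarrow> int list" where
  "unitv d j = map (\<lambda>i. if i = j then 1 else 0) [0..<d]"

definition in_C :: "nat \<Rightarrow> nat \<Rightarrow> nat \<Rightarrow> int list \<Rightarrow> bool" where
  "in_C \<alpha> \<beta> d v \<longleftrightarrow> length v = d \<and>
     (\<exists>i j. i < d \<and> j < d \<and> i \<noteq> j \<and> \<bar>v ! i\<bar> = int \<alpha> \<and> \<bar>v ! j\<bar> = int \<beta> \<and>
            (\<forall>l<d. l \<noteq> i \<and> l \<noteq> j \<longrightarrow> v ! l = 0))"

definition adj :: "nat \<Rightarrow> nat \<Rightarrow> nat list \<Rightarrow> int list \<Rightarrow> int list \<Rightarrow> bool" where
  "adj \<alpha> \<beta> ns a b \<longleftrightarrow> a \<in> board ns \<and> b \<in> board ns \<and> in_C \<alpha> \<beta> (length ns) (vdiff a b)"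

definition cyc :: "'a list \<Rightarrow> nat \<Rightarrow> 'a" where
  "cyc cs i = cs ! (i mod length cs)"

definition ham_cycle :: "nat \<Rightarrow> nat \<Rightarrow> nat list \<Rightarrow> int list list \<Rightarrow> bool" where
  "ham_cycle \<alpha> \<beta> ns cs \<longleftrightarrow> length cs \<ge> 3 \<and> distinct cs \<and> set cs = board ns \<and>
     (\<forall>i<length cs. adj \<alpha> \<beta> ns (cyc cs i) (cyc cs (Suc i)))"

definition axis_mult :: "nat \<Rightarrow> nat \<Rightarrow> int list \<Rightarrow> bool" where
  "axis_mult d g v \<longleftrightarrow> (\<exists>j<d. v = vscale (int g) (unitv d j) \<or> v = vscale (- int g) (unitv d j))"

(* well-oriented g-site (a^n, a^{n+1}, a^m, a^{m+1}) *)
definition well_oriented_site :: "nat \<Rightarrow> int list list \<Rightarrow> nat \<Rightarrow> nat \<Rightarrow> bool" where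
  "well_oriented_site g cs n m \<longleftrightarrow>
     n < length cs \<and> m < length cs \<and>
     (\<exists>s\<in>{1, -1}. vdiff (cyc cs (Suc n)) (cyc cs m) = vscale s (vdiff (cyc cs (Suc m)) (cyc cs n))) \<and>
     axis_mult (length (cyc cs n)) g (vdiff (cyc cs (Suc n)) (cyc cs m))"

(* non-well-oriented g-site (a^n, a^{n+1}, a^{m+1}, a^m) *)
definition non_well_oriented_site :: "nat \<Rightarrow> int list list \<Rightarrow> nat \<Rightarrow> nat \<Rightarrow> bool" where
  "non_well_oriented_site g cs n m \<longleftrightarrow>
     n < length cs \<and> m < length cs \<and>
     (\<exists>s\<in>{1, -1}. vdiff (cyc cs n) (cyc cs m) = vscale s (vdiff (cyc cs (Suc m)) (cyc cs (Suc n)))) \<and>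
     axis_mult (length (cyc cs n)) g (vdiff (cyc cs n) (cyc cs m))"

definition is_site :: "nat \<Rightarrow> int list list \<Rightarrow> bool \<times> nat \<times> nat \<Rightarrow> bool" where
  "is_site g cs s = (case s of (w, n, m) \<Rightarrow>
      (if w then well_oriented_site g cs n m else non_well_oriented_site g cs n m))"

definition site_support :: "int list list \<Rightarrow> bool \<times> nat \<times> nat \<Rightarrow> int list set" where
  "site_support cs s = (case s of (w, n, m) \<Rightarrow>
      {cyc cs n, cyc cs (Suc n), cyc cs m, cyc cs (Suc m)})"

definition good_ham_cycle :: "nat \<Rightarrow> nat \<Rightarrow> nat list \<Rightarrow> int list list \<Rightarrow> bool" where
  "good_ham_cycle \<alpha> \<beta> ns cs \<longleftrightarrow> ham_cycle \<alpha> \<beta> ns cs \<and>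
     (\<exists>s1 s2 s3 s4. is_site \<alpha> cs s1 \<and> is_site \<alpha> cs s2 \<and> is_site \<beta> cs s3 \<and> is_site \<beta> cs s4 \<and>
        (let S = [site_support cs s1, site_support cs s2, site_support cs s3, site_support cs s4]
         in \<forall>i<4. \<forall>j<4. i \<noteq> j \<longrightarrow> S ! i \<inter> S ! j = {}))"

end

theory Submission
  imports Defs "HOL-Number_Theory.Cong"
begin

text \<open>The new board consists of \<open>k\<close> layers, each a copy of the old board carrying a copy of the
  given cycle. Let \<open>A\<close> be an \<open>\<alpha>\<close>-site and \<open>B\<close> a \<open>\<beta>\<close>-site, with cycle edges \<open>{x, y}\<close>, \<open>{z, w}\<close> where
  \<open>x - z, y - w \<in> {\<plusminus>\<alpha> e\<^sub>j}\<close> for \<open>A\<close>. Removing \<open>{x, y}\<close> in layer \<open>t\<close> and \<open>{z, w}\<close> in layer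
  \<open>t + \<beta>\<close> and adding the edges \<open>(x, t)(z, t + \<beta>)\<close> and \<open>(y, t)(w, t + \<beta>)\<close> merges the two layer
  cycles into one; likewise \<open>B\<close> merges layers at distance \<open>\<alpha>\<close>. A Hamiltonian cycle forces
  \<open>gcd \<alpha> \<beta> = 1\<close>, and then for \<open>k \<ge> \<alpha> + \<beta> - 1\<close> the layers are connected by steps \<open>\<plusminus>\<alpha>\<close>, \<open>\<plusminus>\<beta>\<close>
  (the residues \<open>j \<alpha> mod (\<alpha> + \<beta>)\<close> run through \<open>1, \<dots>, \<alpha> + \<beta> - 1\<close>), so merging along a
  spanning tree gives a Hamiltonian cycle of the new board. Only edges of \<open>A\<close> and \<open>B\<close> are removed, so the
  other two sites survive in layers 1 and 2 (if \<open>k = 1\<close>, nothing is merged at all).\<close>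

fun path_edges :: "'a list \<Rightarrow> 'a set set" where
  "path_edges (a # b # xs) = insert {a, b} (path_edges (b # xs))"
| "path_edges _ = {}"

definition cycle_edges :: "'a list \<Rightarrow> 'a set set" where
  "cycle_edges xs = insert {last xs, hd xs} (path_edges xs)"

lemma path_edges_append:
  "xs \<noteq> [] \<Longrightarrow> ys \<noteq> [] \<Longrightarrow> path_edges (xs @ ys) = path_edges xs \<union> path_edges ys \<union> {{last xs, hd ys}}"
proof (induction xs rule: path_edges.induct)
  case ("2_2" v) then show ?case by (cases ys) auto
qed auto

lemma path_edges_rev: "path_edges (rev xs) = path_edges xs"
proof (induction xs rule: path_edges.induct)
  case (1 a b xs)
  have "path_edges (rev (a # b # xs)) = path_edges (rev (b # xs)) \<union> {{b, a}}"
    by (simp add: path_edges_append[of "rev xs @ [b]" "[a]", simplified])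
  then show ?case using "1.IH" by (auto simp: insert_commute)
qed auto

lemma path_edges_map: "path_edges (map f xs) = (\<lambda>e. f ` e) ` path_edges xs"
  by (induction xs rule: path_edges.induct) auto

lemma path_edges_iff_nth: "e \<in> path_edges xs \<longleftrightarrow> (\<exists>i. Suc i < length xs \<and> e = {xs ! i, xs ! Suc i})"
proof (induction xs rule: path_edges.induct)
  case (1 a b xs)
  have "(\<exists>i. Suc i < length (a # b # xs) \<and> e = {(a # b # xs) ! i, (a # b # xs) ! Suc i}) \<longleftrightarrow>
        e = {a, b} \<or> (\<exists>i. Suc i < length (b # xs) \<and> e = {(b # xs) ! i, (b # xs) ! Suc i})"
    (is "?l \<longleftrightarrow> ?r")
  proof
    assume ?l
    then obtain i where "Suc i < length (a # b # xs)" "e = {(a # b # xs) ! i, (a # b # xs) ! Suc i}"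
      by blast
    then show ?r by (cases i) auto
  next
    assume ?r
    then show ?l by (auto intro: exI[of _ 0] exI[of _ "Suc _"])
  qed
  then show ?case using "1.IH" by simp
qed auto

lemma cycle_edges_rev: "cycle_edges (rev xs) = cycle_edges xs"
  by (cases "xs = []") (auto simp: cycle_edges_def path_edges_rev last_rev hd_rev)

lemma cycle_edges_rotate1: "cycle_edges (rotate1 xs) = cycle_edges xs"
proof (cases xs)
  case (Cons a ys)
  show ?thesis
  proof (cases ys)
    case (Cons b zs)
    have "path_edges (ys @ [a]) = path_edges ys \<union> {{last ys, a}}"
      using Cons path_edges_append[of ys "[a]"] by simp
    then show ?thesis using Cons \<open>xs = a # ys\<close> by (auto simp: cycle_edges_def)
  qed (use Cons in simp)
qed simp

lemma cycle_edges_rotate: "cycle_edges (rotate n xs) = cycle_edges xs"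
  by (induction n) (simp_all only: rotate_Suc cycle_edges_rotate1 rotate0 id_apply)

lemma cycle_edges_map: "xs \<noteq> [] \<Longrightarrow> cycle_edges (map f xs) = (\<lambda>e. f ` e) ` cycle_edges xs"
  by (simp add: cycle_edges_def path_edges_map last_map hd_map)

lemma cycle_edges_iff_cyc:
  assumes "xs \<noteq> []"
  shows "e \<in> cycle_edges xs \<longleftrightarrow> (\<exists>i<length xs. e = {cyc xs i, cyc xs (Suc i)})"
proof
  assume "e \<in> cycle_edges xs"
  then consider "e = {last xs, hd xs}" | i where "Suc i < length xs" "e = {xs ! i, xs ! Suc i}"
    by (auto simp: cycle_edges_def path_edges_iff_nth)
  then show "\<exists>i<length xs. e = {cyc xs i, cyc xs (Suc i)}"
  proof cases
    case 1
    then show ?thesis using assms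
      by (intro exI[of _ "length xs - 1"]) (auto simp: cyc_def last_conv_nth hd_conv_nth)
  next
    case (2 i)
    then show ?thesis by (intro exI[of _ i]) (auto simp: cyc_def)
  qed
next
  assume "\<exists>i<length xs. e = {cyc xs i, cyc xs (Suc i)}"
  then obtain i where i: "i < length xs" "e = {cyc xs i, cyc xs (Suc i)}" by blast
  show "e \<in> cycle_edges xs"
  proof (cases "Suc i < length xs")
    case True
    then show ?thesis using i by (auto simp: cycle_edges_def path_edges_iff_nth cyc_def)
  next
    case False
    then have "i = length xs - 1" "Suc i = length xs" using i by auto
    then show ?thesis using i assms by (auto simp: cycle_edges_def cyc_def last_conv_nth hd_conv_nth)
  qed
qed


lemma cycle_cut_at_edge:
  assumes "xs \<noteq> []" "{x, y} \<in> cycle_edges xs"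
  obtains R where "set R = set xs" "distinct R = distinct xs" "length R = length xs"
    "cycle_edges R = cycle_edges xs" "hd R = y" "last R = x"
proof -
  obtain i where i: "i < length xs" "{x, y} = {cyc xs i, cyc xs (Suc i)}"
    using assms cycle_edges_iff_cyc by blast
  define R where "R = rotate (Suc i) xs"
  have R: "set R = set xs" "distinct R = distinct xs" "length R = length xs"
    "cycle_edges R = cycle_edges xs" "R \<noteq> []"
    using assms(1) by (simp_all add: R_def cycle_edges_rotate del: rotate_Suc)
  have "hd R = R ! 0" "last R = R ! (length xs - 1)"
    using R by (simp_all add: hd_conv_nth last_conv_nth)
  moreover have "Suc i + (length xs - 1) = i + length xs"
    using assms(1) by (cases xs) auto
  ultimately have hd_last: "hd R = cyc xs (Suc i)" "last R = cyc xs i"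
    using assms(1) i(1) by (simp_all add: R_def cyc_def nth_rotate del: rotate_Suc)
  from i(2) consider "x = cyc xs i" "y = cyc xs (Suc i)" | "y = cyc xs i" "x = cyc xs (Suc i)"
    by (auto simp: doubleton_eq_iff)
  then show ?thesis
  proof cases
    case 1
    then show ?thesis using that R hd_last by simp
  next
    case 2
    then show ?thesis using that[of "rev R"] R hd_last by (simp add: cycle_edges_rev hd_rev last_rev)
  qed
qed

text \<open>Edge exchange: drop \<open>{x, y}\<close> and \<open>{u, v}\<close>, insert \<open>{x, u}\<close> and \<open>{y, v}\<close>.\<close>
lemma cycle_merge:
  assumes sym: "\<And>a b. R a b \<Longrightarrow> R b a"
    and ne: "C1 \<noteq> []" "C2 \<noteq> []"
    and e: "{x, y} \<in> cycle_edges C1" "{u, v} \<in> cycle_edges C2"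
    and R: "R x u" "R y v"
    and R1: "\<And>a b. {a, b} \<in> cycle_edges C1 \<Longrightarrow> R a b"
    and R2: "\<And>a b. {a, b} \<in> cycle_edges C2 \<Longrightarrow> R a b"
  obtains C where "set C = set C1 \<union> set C2" "length C = length C1 + length C2"
    "distinct C \<longleftrightarrow> distinct C1 \<and> distinct C2 \<and> set C1 \<inter> set C2 = {}"
    "\<And>a b. {a, b} \<in> cycle_edges C \<Longrightarrow> R a b"
    "cycle_edges C1 \<union> cycle_edges C2 - {{x, y}, {u, v}} \<subseteq> cycle_edges C"
proof -
  obtain P1 where P1: "set P1 = set C1" "distinct P1 = distinct C1" "length P1 = length C1"
    "cycle_edges P1 = cycle_edges C1" "hd P1 = y" "last P1 = x"
    using cycle_cut_at_edge[OF ne(1) e(1)] by blast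
  obtain P2 where P2: "set P2 = set C2" "distinct P2 = distinct C2" "length P2 = length C2"
    "cycle_edges P2 = cycle_edges C2" "hd P2 = u" "last P2 = v"
    using cycle_cut_at_edge[OF ne(2), of v u] e(2) by (auto simp: insert_commute)
  have "P1 \<noteq> []" "P2 \<noteq> []" using P1(3) P2(3) ne by auto
  then have edges: "cycle_edges (P1 @ P2) = {{v, y}, {x, u}} \<union> path_edges P1 \<union> path_edges P2"
    and E1: "cycle_edges C1 = insert {x, y} (path_edges P1)"
    and E2: "cycle_edges C2 = insert {u, v} (path_edges P2)"
    using P1 P2 by (auto simp: cycle_edges_def path_edges_append insert_commute)
  have "R a b" if "{a, b} \<in> cycle_edges (P1 @ P2)" for a b
    using that R1 R2 R sym unfolding edges E1 E2 by (auto simp: doubleton_eq_iff)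
  then show ?thesis
    using that[of "P1 @ P2"] P1 P2 edges E1 E2 by auto
qed

lemma length_vdiff [simp]: "length (vdiff a b) = min (length a) (length b)"
  by (simp add: vdiff_def)

lemma nth_vdiff [simp]: "l < length a \<Longrightarrow> l < length b \<Longrightarrow> vdiff a b ! l = a ! l - b ! l"
  by (simp add: vdiff_def)

lemma length_vscale [simp]: "length (vscale s v) = length v"
  by (simp add: vscale_def)

lemma nth_vscale [simp]: "l < length v \<Longrightarrow> vscale s v ! l = s * v ! l"
  by (simp add: vscale_def)

lemma vscale_vscale [simp]: "vscale s (vscale t v) = vscale (s * t) v"
  by (simp add: vscale_def)

lemma vscale_1 [simp]: "vscale 1 v = v"
  by (induction v) (simp_all add: vscale_def)

lemma vdiff_snoc: "length a = length b \<Longrightarrow> vdiff (a @ [x]) (b @ [y]) = vdiff a b @ [x - y]"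
  by (simp add: vdiff_def)

lemma vscale_snoc: "vscale s (v @ [x]) = vscale s v @ [s * x]"
  by (simp add: vscale_def)

lemma vdiff_commute: "length a = length b \<Longrightarrow> vdiff b a = vscale (-1) (vdiff a b)"
  by (rule nth_equalityI) auto

lemma axis_mult_iff:
  "axis_mult d g v \<longleftrightarrow> length v = d \<and>
     (\<exists>j<d. \<exists>c\<in>{int g, - int g}. \<forall>l<d. v ! l = (if l = j then c else 0))"
proof
  assume "axis_mult d g v"
  then show "length v = d \<and> (\<exists>j<d. \<exists>c\<in>{int g, - int g}. \<forall>l<d. v ! l = (if l = j then c else 0))"
    by (auto simp: axis_mult_def unitv_def)
next
  assume "length v = d \<and> (\<exists>j<d. \<exists>c\<in>{int g, - int g}. \<forall>l<d. v ! l = (if l = j then c else 0))"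
  then obtain j c where j: "length v = d" "j < d" "c \<in> {int g, - int g}"
    "\<forall>l<d. v ! l = (if l = j then c else 0)"
    by blast
  have "v = vscale c (unitv d j)"
    by (rule nth_equalityI) (use j in \<open>auto simp: unitv_def\<close>)
  then show "axis_mult d g v" using j by (auto simp: axis_mult_def)
qed

lemma axis_mult_snoc_0: "axis_mult d g v \<Longrightarrow> axis_mult (Suc d) g (v @ [0])"
  unfolding axis_mult_iff by (auto simp: nth_append less_Suc_eq)

lemma axis_mult_vscale: "s \<in> {1, -1} \<Longrightarrow> axis_mult d g v \<Longrightarrow> axis_mult d g (vscale s v)"
  unfolding axis_mult_iff by auto

lemma axis_mult_nonzero: "g > 0 \<Longrightarrow> axis_mult d g v \<Longrightarrow> \<exists>l<d. v ! l \<noteq> 0"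
  unfolding axis_mult_iff by auto

lemma in_C_vscale_neg: "in_C \<alpha> \<beta> d v \<Longrightarrow> in_C \<alpha> \<beta> d (vscale (-1) v)"
  unfolding in_C_def
  by (elim conjE exE, intro conjI exI) (auto simp del: mult_minus1)

lemma in_C_snoc_0: "in_C \<alpha> \<beta> d v \<Longrightarrow> in_C \<alpha> \<beta> (Suc d) (v @ [0])"
  unfolding in_C_def
  by (elim conjE exE, intro conjI exI) (auto simp: nth_append less_Suc_eq)

lemma in_C_snoc_axis_mult:
  assumes "axis_mult d g v" "g = \<alpha> \<and> \<bar>c\<bar> = int \<beta> \<or> g = \<beta> \<and> \<bar>c\<bar> = int \<alpha>"
  shows "in_C \<alpha> \<beta> (Suc d) (v @ [c])"
proof -
  obtain j e where j: "length v = d" "j < d" "e \<in> {int g, - int g}"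
    "\<forall>l<d. v ! l = (if l = j then e else 0)"
    using assms(1) unfolding axis_mult_iff by blast
  from assms(2) show ?thesis
  proof
    assume "g = \<alpha> \<and> \<bar>c\<bar> = int \<beta>"
    then show ?thesis unfolding in_C_def
      using j by (intro conjI exI[of _ j] exI[of _ d]) (auto simp: nth_append less_Suc_eq)
  next
    assume "g = \<beta> \<and> \<bar>c\<bar> = int \<alpha>"
    then show ?thesis unfolding in_C_def
      using j by (intro conjI exI[of _ j] exI[of _ d]) (auto simp: nth_append less_Suc_eq)
  qed
qed

lemma in_C_not_axis_mult:
  assumes "\<alpha> > 0" "\<beta> > 0" "in_C \<alpha> \<beta> d v"
  shows "\<not> axis_mult d g v"
proof
  assume "axis_mult d g v"
  then obtain j e where "\<forall>l<d. v ! l = (if l = j then e else 0)"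
    unfolding axis_mult_iff by blast
  moreover obtain i i' where "i < d" "i' < d" "i \<noteq> i'" "\<bar>v ! i\<bar> = int \<alpha>" "\<bar>v ! i'\<bar> = int \<beta>"
    using assms(3) unfolding in_C_def by blast
  ultimately show False using assms(1,2) by (cases "i = j") auto
qed

lemma board_length: "a \<in> board ns \<Longrightarrow> length a = length ns"
  by (simp add: board_def)

lemma adj_sym: "adj \<alpha> \<beta> ns a b \<Longrightarrow> adj \<alpha> \<beta> ns b a"
  unfolding adj_def using vdiff_commute[of a b] in_C_vscale_neg board_length by metis

text \<open>\<open>site_quad g x y z w\<close>: the edges \<open>{x, y}\<close> and \<open>{z, w}\<close> of a cycle form a \<open>g\<close>-site in which
  \<open>x\<close> faces \<open>z\<close> and \<open>y\<close> faces \<open>w\<close>. Well- and non-well-oriented sites are the two ways of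
  reading such a quadruple off the cycle order.\<close>
definition site_quad :: "nat \<Rightarrow> int list \<Rightarrow> int list \<Rightarrow> int list \<Rightarrow> int list \<Rightarrow> bool" where
  "site_quad g x y z w \<longleftrightarrow>
     axis_mult (length x) g (vdiff x z) \<and> (\<exists>s\<in>{1, -1}. vdiff x z = vscale s (vdiff y w))"

lemma site_quad_iff:
  assumes "length y = length x" "length w = length x"
  shows "site_quad g x y z w \<longleftrightarrow>
    axis_mult (length x) g (vdiff x z) \<and> (\<exists>s\<in>{1, -1}. vdiff x z = vscale s (vdiff w y))"
proof -
  have "(\<exists>s\<in>{1, -1}. vdiff x z = vscale s (vdiff y w)) \<longleftrightarrow>
        (\<exists>s\<in>{1, -1}. vdiff x z = vscale s (vdiff w y))"
    using assms by (auto simp: vdiff_commute[of w y] intro: bexI[of _ "-1"] bexI[of _ 1])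
  then show ?thesis unfolding site_quad_def by blast
qed

lemma site_quad_swap:
  assumes "site_quad g x y z w" "length y = length x" "length w = length x"
  shows "site_quad g y x w z"
proof -
  obtain s where s: "s \<in> {1, -1}" "vdiff x z = vscale s (vdiff y w)" "axis_mult (length x) g (vdiff x z)"
    using assms(1) unfolding site_quad_def by blast
  then have "vdiff y w = vscale s (vdiff x z)" by auto
  with s assms(2) show ?thesis unfolding site_quad_def using axis_mult_vscale by auto
qed

lemma site_quad_facing_axis_mult:
  assumes "site_quad g x y z w" "length y = length x" "length w = length x"
  shows "axis_mult (length x) g (vdiff x z)" "axis_mult (length x) g (vdiff y w)"
  using assms site_quad_swap[OF assms] by (simp_all add: site_quad_def)

definition cycle_site :: "nat \<Rightarrow> int list list \<Rightarrow> int list \<Rightarrow> int list \<Rightarrow> int list \<Rightarrow> int list \<Rightarrow> bool" where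
  "cycle_site g cs x y z w \<longleftrightarrow>
     {x, y} \<in> cycle_edges cs \<and> {z, w} \<in> cycle_edges cs \<and> site_quad g x y z w"

lemma cyc_in_set: "cs \<noteq> [] \<Longrightarrow> cyc cs i \<in> set cs"
  by (simp add: cyc_def)

lemma cycle_edge_in_set: "cs \<noteq> [] \<Longrightarrow> {a, b} \<in> cycle_edges cs \<Longrightarrow> a \<in> set cs \<and> b \<in> set cs"
  by (auto simp: cycle_edges_iff_cyc doubleton_eq_iff cyc_in_set)

lemma cycle_site_of_is_site:
  assumes "is_site g cs st" "\<forall>a\<in>set cs. length a = d" "cs \<noteq> []"
  shows "\<exists>x y z w. cycle_site g cs x y z w \<and> site_support cs st = {x, y, z, w}"
proof -
  obtain wo n m where st: "st = (wo, n, m)" by (cases st)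
  have len: "length (cyc cs i) = d" for i using assms(2,3) cyc_in_set by blast
  have "n < length cs \<and> m < length cs"
    using assms(1) st by (cases wo; simp add: is_site_def well_oriented_site_def non_well_oriented_site_def)
  then have edges: "{cyc cs n, cyc cs (Suc n)} \<in> cycle_edges cs" "{cyc cs m, cyc cs (Suc m)} \<in> cycle_edges cs"
    using assms(3) by (auto simp: cycle_edges_iff_cyc)
  show ?thesis
  proof (cases wo)
    case True
    then have "site_quad g (cyc cs (Suc n)) (cyc cs n) (cyc cs m) (cyc cs (Suc m))"
      using assms(1) st len
      by (simp add: is_site_def well_oriented_site_def site_quad_iff)
    moreover have "{cyc cs (Suc n), cyc cs n} \<in> cycle_edges cs"
      using edges by (simp add: insert_commute)
    moreover have "site_support cs st = {cyc cs (Suc n), cyc cs n, cyc cs m, cyc cs (Suc m)}"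
      using st by (auto simp: site_support_def)
    ultimately show ?thesis
      using edges unfolding cycle_site_def by blast
  next
    case False
    then have "site_quad g (cyc cs n) (cyc cs (Suc n)) (cyc cs m) (cyc cs (Suc m))"
      using assms(1) st len
      by (simp add: is_site_def non_well_oriented_site_def site_quad_iff)
    then show ?thesis
      using edges st by (auto simp: cycle_site_def site_support_def)
  qed
qed

lemma is_site_of_site_quad_cyc:
  assumes "site_quad g x y z w" and len: "\<forall>a\<in>set cs. length a = d" "cs \<noteq> []"
    and "i < length cs" "j < length cs" "z = cyc cs j" "w = cyc cs (Suc j)"
    and xy: "x = cyc cs i \<and> y = cyc cs (Suc i) \<or> x = cyc cs (Suc i) \<and> y = cyc cs i"
  shows "\<exists>st. is_site g cs st \<and> site_support cs st = {x, y, z, w}"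
proof -
  have len_cyc: "length (cyc cs l) = d" for l using len cyc_in_set by blast
  from xy show ?thesis
  proof
    assume "x = cyc cs i \<and> y = cyc cs (Suc i)"
    then show ?thesis
      using assms len_cyc by (intro exI[of _ "(False, i, j)"])
        (auto simp: is_site_def non_well_oriented_site_def site_support_def site_quad_iff)
  next
    assume "x = cyc cs (Suc i) \<and> y = cyc cs i"
    then show ?thesis
      using assms len_cyc by (intro exI[of _ "(True, i, j)"])
        (auto simp: is_site_def well_oriented_site_def site_support_def site_quad_iff insert_commute)
  qed
qed

lemma is_site_of_cycle_site:
  assumes site: "cycle_site g cs x y z w" and len: "\<forall>a\<in>set cs. length a = d" and ne: "cs \<noteq> []"
  shows "\<exists>st. is_site g cs st \<and> site_support cs st = {x, y, z, w}"
proof -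
  obtain i j where i: "i < length cs" "{x, y} = {cyc cs i, cyc cs (Suc i)}"
    and j: "j < length cs" "{z, w} = {cyc cs j, cyc cs (Suc j)}"
    using site ne by (auto simp: cycle_site_def cycle_edges_iff_cyc)
  have quad: "site_quad g x y z w" using site by (simp add: cycle_site_def)
  have "x \<in> set cs" "y \<in> set cs" "w \<in> set cs"
    using cycle_edge_in_set[OF ne] site unfolding cycle_site_def by blast+
  then have "site_quad g y x w z" using site_quad_swap[OF quad] len by simp
  note found = is_site_of_site_quad_cyc[OF quad len ne i(1) j(1)]
    is_site_of_site_quad_cyc[OF this len ne i(1) j(1)]
  from j(2) consider "z = cyc cs j" "w = cyc cs (Suc j)" | "w = cyc cs j" "z = cyc cs (Suc j)"
    by (auto simp: doubleton_eq_iff)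
  then show ?thesis
  proof cases
    case 1
    then show ?thesis using found(1) i(2) by (auto simp: doubleton_eq_iff)
  next
    case 2
    then show ?thesis using found(2) i(2) by (auto simp: doubleton_eq_iff insert_commute)
  qed
qed

lemma site_quad_snoc:
  assumes "site_quad g x y z w" "length y = length x" "length z = length x" "length w = length x"
  shows "site_quad g (x @ [c]) (y @ [c]) (z @ [c]) (w @ [c])"
  using assms unfolding site_quad_def by (auto simp: vdiff_snoc vscale_snoc axis_mult_snoc_0)

lemma site_quad_edges_distinct:
  assumes "\<alpha> > 0" "\<beta> > 0" "g > 0" "site_quad g x y z w" "in_C \<alpha> \<beta> (length x) (vdiff x y)"
    "length y = length x" "length z = length x"
  shows "{x, y} \<noteq> {z, w}"
proof
  assume "{x, y} = {z, w}"
  then consider "x = z" | "x = w" "y = z" by (auto simp: doubleton_eq_iff)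
  moreover have ax: "axis_mult (length x) g (vdiff x z)" using assms(4) by (simp add: site_quad_def)
  ultimately show False
  proof cases
    case 1
    then show False using axis_mult_nonzero[OF assms(3) ax] by auto
  next
    case 2
    then show False using in_C_not_axis_mult[OF assms(1,2,5)] ax by simp
  qed
qed

definition disjoint4 :: "'a set \<Rightarrow> 'a set \<Rightarrow> 'a set \<Rightarrow> 'a set \<Rightarrow> bool" where
  "disjoint4 A B C D \<longleftrightarrow>
     A \<inter> B = {} \<and> A \<inter> C = {} \<and> A \<inter> D = {} \<and> B \<inter> C = {} \<and> B \<inter> D = {} \<and> C \<inter> D = {}"

lemma disjoint4_iff_nth:
  "disjoint4 A B C D \<longleftrightarrow> (let S = [A, B, C, D] in \<forall>i<4. \<forall>j<4. i \<noteq> j \<longrightarrow> S ! i \<inter> S ! j = {})"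
proof -
  have "(\<forall>i<(4::nat). P i) \<longleftrightarrow> P 0 \<and> P 1 \<and> P 2 \<and> P 3" for P
    by (auto simp: eval_nat_numeral less_Suc_eq)
  then show ?thesis by (auto simp: disjoint4_def Let_def Int_commute)
qed

lemma ham_cycle_lengths: "ham_cycle \<alpha> \<beta> ns cs \<Longrightarrow> \<forall>a\<in>set cs. length a = length ns"
  by (auto simp: ham_cycle_def board_length)

lemma ham_cycle_nonempty: "ham_cycle \<alpha> \<beta> ns cs \<Longrightarrow> cs \<noteq> []"
  by (auto simp: ham_cycle_def)

lemma good_ham_cycle_iff_cycle_sites:
  assumes "ham_cycle \<alpha> \<beta> ns cs"
  shows "good_ham_cycle \<alpha> \<beta> ns cs \<longleftrightarrow>
    (\<exists>x1 y1 z1 w1 x2 y2 z2 w2 x3 y3 z3 w3 x4 y4 z4 w4.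
       cycle_site \<alpha> cs x1 y1 z1 w1 \<and> cycle_site \<alpha> cs x2 y2 z2 w2 \<and>
       cycle_site \<beta> cs x3 y3 z3 w3 \<and> cycle_site \<beta> cs x4 y4 z4 w4 \<and>
       disjoint4 {x1, y1, z1, w1} {x2, y2, z2, w2} {x3, y3, z3, w3} {x4, y4, z4, w4})"
  (is "_ \<longleftrightarrow> ?sites")
proof -
  note ne = ham_cycle_nonempty[OF assms] and len = ham_cycle_lengths[OF assms]
  have "good_ham_cycle \<alpha> \<beta> ns cs \<longleftrightarrow> (\<exists>s1 s2 s3 s4.
     is_site \<alpha> cs s1 \<and> is_site \<alpha> cs s2 \<and> is_site \<beta> cs s3 \<and> is_site \<beta> cs s4 \<and>
     disjoint4 (site_support cs s1) (site_support cs s2) (site_support cs s3) (site_support cs s4))"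
    using assms by (simp add: good_ham_cycle_def disjoint4_iff_nth)
  also have "\<dots> \<longleftrightarrow> ?sites"
  proof
    assume "\<exists>s1 s2 s3 s4. is_site \<alpha> cs s1 \<and> is_site \<alpha> cs s2 \<and> is_site \<beta> cs s3 \<and> is_site \<beta> cs s4 \<and>
     disjoint4 (site_support cs s1) (site_support cs s2) (site_support cs s3) (site_support cs s4)"
    then show ?sites using cycle_site_of_is_site[OF _ len ne] by metis
  next
    assume ?sites
    then show "\<exists>s1 s2 s3 s4. is_site \<alpha> cs s1 \<and> is_site \<alpha> cs s2 \<and> is_site \<beta> cs s3 \<and> is_site \<beta> cs s4 \<and>
     disjoint4 (site_support cs s1) (site_support cs s2) (site_support cs s3) (site_support cs s4)"
      using is_site_of_cycle_site[OF _ len ne] by metis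
  qed
  finally show ?thesis .
qed

lemma in_C_gcd_dvd:
  assumes "in_C \<alpha> \<beta> d v" "l < d"
  shows "int (gcd \<alpha> \<beta>) dvd v ! l"
proof -
  obtain i j where ij: "\<bar>v ! i\<bar> = int \<alpha>" "\<bar>v ! j\<bar> = int \<beta>"
    "\<forall>l<d. l \<noteq> i \<and> l \<noteq> j \<longrightarrow> v ! l = 0"
    using assms(1) unfolding in_C_def by blast
  have "int (gcd \<alpha> \<beta>) dvd \<bar>v ! i\<bar>" "int (gcd \<alpha> \<beta>) dvd \<bar>v ! j\<bar>"
    unfolding ij(1,2) by (simp_all add: int_dvd_int_iff)
  then show ?thesis using ij(3) assms(2) by (cases "l = i \<or> l = j") auto
qed

lemma ham_cycle_adj_cyc:
  assumes "ham_cycle \<alpha> \<beta> ns cs"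
  shows "adj \<alpha> \<beta> ns (cyc cs i) (cyc cs (Suc i))"
proof -
  have "cyc cs (i mod length cs) = cyc cs i" "cyc cs (Suc (i mod length cs)) = cyc cs (Suc i)"
    by (simp_all add: cyc_def mod_Suc_eq)
  moreover have "i mod length cs < length cs" using ham_cycle_nonempty[OF assms] by simp
  ultimately show ?thesis using assms unfolding ham_cycle_def by metis
qed

text \<open>Every step of the cycle moves each coordinate by a multiple of \<open>gcd \<alpha> \<beta>\<close>, and the cycle
  visits the whole board.\<close>
lemma ham_cycle_board_congruent:
  assumes ham: "ham_cycle \<alpha> \<beta> ns cs" and "a \<in> board ns" "b \<in> board ns" "l < length ns"
  shows "int (gcd \<alpha> \<beta>) dvd a ! l - b ! l"
proof -
  have ne: "cs \<noteq> []" using ham_cycle_nonempty[OF ham] .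
  have len: "length (cyc cs i) = length ns" for i
    using ham_cycle_lengths[OF ham] cyc_in_set[OF ne] by blast
  have from_start: "int (gcd \<alpha> \<beta>) dvd cyc cs i ! l - cyc cs 0 ! l" for i
  proof (induction i)
    case (Suc i)
    have "in_C \<alpha> \<beta> (length ns) (vdiff (cyc cs i) (cyc cs (Suc i)))"
      using ham_cycle_adj_cyc[OF ham] by (simp add: adj_def)
    then have "int (gcd \<alpha> \<beta>) dvd cyc cs i ! l - cyc cs (Suc i) ! l"
      using in_C_gcd_dvd[OF _ assms(4)] len assms(4) by fastforce
    with Suc.IH have "int (gcd \<alpha> \<beta>) dvd (cyc cs i ! l - cyc cs 0 ! l) - (cyc cs i ! l - cyc cs (Suc i) ! l)"
      by (rule dvd_diff)
    then show ?case by simp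
  qed simp
  have "\<exists>i. c = cyc cs i" if "c \<in> board ns" for c
  proof -
    have "c \<in> set cs" using that ham by (simp add: ham_cycle_def)
    then obtain i where "i < length cs" "c = cs ! i" by (auto simp: in_set_conv_nth)
    then show ?thesis by (metis cyc_def mod_less)
  qed
  then obtain i j where "a = cyc cs i" "b = cyc cs j" using assms(2,3) by blast
  then have "int (gcd \<alpha> \<beta>) dvd (a ! l - cyc cs 0 ! l) - (b ! l - cyc cs 0 ! l)"
    using from_start by (simp only: dvd_diff)
  then show ?thesis by simp
qed

lemma ham_cycle_coprime:
  assumes ham: "ham_cycle \<alpha> \<beta> ns cs" and pos: "\<forall>i<length ns. ns ! i > 0"
  shows "coprime \<alpha> \<beta>"
proof -
  have cs: "3 \<le> length cs" "distinct cs" "set cs = board ns"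
    using ham by (auto simp: ham_cycle_def)
  then have "0 < length cs" "1 < length cs" by auto
  then have "cs ! 0 \<noteq> cs ! 1" "cs ! 0 \<in> board ns" "cs ! 1 \<in> board ns"
    using cs(2) nth_mem[of 0 cs] nth_mem[of 1 cs] unfolding cs(3) by (simp_all add: nth_eq_iff_index_eq)
  then obtain l where l: "l < length ns" "cs ! 0 ! l \<noteq> cs ! 1 ! l"
    by (metis board_length nth_equalityI)
  with \<open>cs ! 0 \<in> board ns\<close> \<open>cs ! 1 \<in> board ns\<close> have "ns ! l \<ge> 2"
    unfolding board_def by fastforce
  define p where "p = replicate (length ns) (1::int)"
  have "p \<in> board ns" "p[l := 2] \<in> board ns"
    using pos \<open>ns ! l \<ge> 2\<close> l(1) by (auto simp: board_def p_def nth_list_update Suc_le_eq)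
  then have "int (gcd \<alpha> \<beta>) dvd p[l := 2] ! l - p ! l"
    using ham_cycle_board_congruent[OF ham _ _ l(1)] by blast
  then show ?thesis using l(1) by (simp add: p_def coprime_iff_gcd_eq_1)
qed

text \<open>Connectedness of \<open>T\<close> in the graph on \<open>{1..k}\<close> joining layers at distance \<open>\<alpha>\<close> or \<open>\<beta>\<close>,
  recorded as the insertion order of a spanning tree.\<close>
inductive layer_buildable :: "nat \<Rightarrow> nat \<Rightarrow> nat \<Rightarrow> nat set \<Rightarrow> bool" for \<alpha> \<beta> k where
  single: "t \<in> {1..k} \<Longrightarrow> layer_buildable \<alpha> \<beta> k {t}"
| insert: "layer_buildable \<alpha> \<beta> k T \<Longrightarrow> t0 \<in> T \<Longrightarrow> t \<notin> T \<Longrightarrow> t \<in> {1..k} \<Longrightarrow>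
    \<bar>int t - int t0\<bar> \<in> {int \<alpha>, int \<beta>} \<Longrightarrow> layer_buildable \<alpha> \<beta> k (insert t T)"

lemma layer_buildable_subset: "layer_buildable \<alpha> \<beta> k T \<Longrightarrow> T \<subseteq> {1..k}"
  by (induction rule: layer_buildable.induct) auto

lemma mod_add_step:
  assumes "x < \<alpha> + \<beta>"
  shows "\<bar>int ((x + \<alpha>) mod (\<alpha> + \<beta>)) - int x\<bar> \<in> {int \<alpha>, int \<beta>}"
proof (cases "x + \<alpha> < \<alpha> + \<beta>")
  case False
  then have "(x + \<alpha>) mod (\<alpha> + \<beta>) = x - \<beta>"
    using assms by (simp add: mod_if le_mod_geq)
  then show ?thesis using False by auto
qed simp

lemma inj_on_mult_mod:
  assumes "coprime a (n::nat)"
  shows "inj_on (\<lambda>j. j * a mod n) {..<n}"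
proof (rule inj_onI)
  fix i j assume "i \<in> {..<n}" "j \<in> {..<n}" "i * a mod n = j * a mod n"
  then show "i = j"
    using assms by (simp add: cong_mult_rcancel_nat cong_less_modulus_unique_nat flip: cong_def)
qed

lemma mult_mod_image:
  assumes "coprime a (n::nat)"
  shows "(\<lambda>j. j * a mod n) ` {1..<n} = {1..<n}"
proof -
  have "j * a mod n \<in> {1..<n}" if "j \<in> {1..<n}" for j
  proof -
    have "j * a mod n \<noteq> 0" using that inj_onD[OF inj_on_mult_mod[OF assms], of j 0] by auto
    then show ?thesis using that by simp
  qed
  then have "(\<lambda>j. j * a mod n) ` {1..<n} \<subseteq> {1..<n}" by blast
  moreover have "card ((\<lambda>j. j * a mod n) ` {1..<n}) = card {1..<n}"
    by (rule card_image, rule inj_on_subset[OF inj_on_mult_mod[OF assms]]) auto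
  ultimately show ?thesis by (intro card_subset_eq) auto
qed

text \<open>Walk through \<open>{1..\<alpha> + \<beta> - 1}\<close> along the multiples \<open>j \<alpha> mod (\<alpha> + \<beta>)\<close>; consecutive ones differ by
  \<open>\<alpha>\<close> or \<open>\<beta>\<close>.\<close>
lemma layer_buildable_initial:
  assumes pos: "\<alpha> > 0" "\<beta> > 0" and cop: "coprime \<alpha> \<beta>" and k: "\<alpha> + \<beta> - 1 \<le> k"
  shows "layer_buildable \<alpha> \<beta> k {1..\<alpha> + \<beta> - 1}"
proof -
  define N where "N = \<alpha> + \<beta>"
  define f where "f j = j * \<alpha> mod N" for j
  have "coprime \<alpha> N" using cop by (simp add: N_def coprime_iff_gcd_eq_1)
  note inj = inj_on_mult_mod[OF this, folded f_def] and image = mult_mod_image[OF this, folded f_def]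
  have f_step: "\<bar>int (f (Suc j)) - int (f j)\<bar> \<in> {int \<alpha>, int \<beta>}" for j
  proof -
    have "f (Suc j) = (f j + \<alpha>) mod N" by (simp add: f_def mod_add_left_eq add.commute[of \<alpha>])
    then show ?thesis using mod_add_step[of "f j" \<alpha> \<beta>] pos by (simp add: N_def f_def)
  qed
  have buildable: "layer_buildable \<alpha> \<beta> k (f ` {1..j})" if "1 \<le> j" "j < N" for j
    using that
  proof (induction j rule: dec_induct)
    case base
    have "f 1 = \<alpha>" using pos by (simp add: f_def N_def)
    then show ?case using k pos by (auto intro: layer_buildable.single simp: N_def)
  next
    case (step j)
    have "f (Suc j) \<notin> f ` {1..j}"
      using inj_onD[OF inj, of "Suc j"] step.prems by fastforce
    moreover have "f (Suc j) \<in> f ` {1..<N}" using step.prems by simp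
    then have "f (Suc j) \<in> {1..k}" using image k by (auto simp: N_def)
    ultimately have "layer_buildable \<alpha> \<beta> k (insert (f (Suc j)) (f ` {1..j}))"
      using step f_step[of j] by (intro layer_buildable.insert[of _ _ _ _ "f j"]) auto
    then show ?case by (simp add: atLeastAtMostSuc_conv step.hyps)
  qed
  have "{1..N - 1} = {1..<N}" "1 \<le> N - 1" "N - 1 < N" using pos by (auto simp: N_def)
  then show ?thesis using buildable[of "N - 1"] image by (simp add: N_def)
qed

lemma layer_buildable_interval:
  assumes "\<alpha> > 0" "\<beta> > 0" "coprime \<alpha> \<beta>" "\<alpha> + \<beta> - 1 \<le> k"
  shows "layer_buildable \<alpha> \<beta> k {1..k}"
proof -
  have "layer_buildable \<alpha> \<beta> k {1..j}" if "\<alpha> + \<beta> - 1 \<le> j" "j \<le> k" for j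
    using that
  proof (induction j rule: dec_induct)
    case base
    then show ?case using layer_buildable_initial assms by blast
  next
    case (step j)
    have "layer_buildable \<alpha> \<beta> k (insert (Suc j) {1..j})"
      using step assms(1,2) by (intro layer_buildable.insert[of _ _ _ _ "Suc j - \<alpha>"]) auto
    then show ?case by (simp add: atLeastAtMostSuc_conv)
  qed
  then show ?thesis using assms(4) by blast
qed

definition lift :: "nat \<Rightarrow> int list \<Rightarrow> int list" where
  "lift t a = a @ [int t]"

lemma lift_eq_iff [simp]: "lift s a = lift t b \<longleftrightarrow> s = t \<and> a = b"
  by (auto simp: lift_def)

lemma length_lift [simp]: "length (lift t a) = Suc (length a)"
  by (simp add: lift_def)

lemma inj_lift: "inj (lift t)"
  by (rule injI) simp

lemma lift_image_eq_iff: "e \<noteq> {} \<Longrightarrow> lift s ` e = lift t ` e' \<longleftrightarrow> s = t \<and> e = e'"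
proof
  assume "e \<noteq> {}" and eq: "lift s ` e = lift t ` e'"
  then obtain a where "a \<in> e" by blast
  then have "lift s a \<in> lift t ` e'" using eq by blast
  then have "s = t" by auto
  then show "s = t \<and> e = e'" using eq by (simp add: inj_image_eq_iff[OF inj_lift])
qed simp

lemma board_snoc_iff: "a @ [c] \<in> board (ns @ [k]) \<longleftrightarrow> a \<in> board ns \<and> 1 \<le> c \<and> c \<le> int k"
proof -
  have "(\<forall>i<Suc (length ns). P i) \<longleftrightarrow> (\<forall>i<length ns. P i) \<and> P (length ns)" for P
    by (auto simp: less_Suc_eq)
  then show ?thesis by (auto simp: board_def nth_append)
qed

lemma board_snoc: "board (ns @ [k]) = (\<Union>t\<in>{1..k}. lift t ` board ns)"
proof
  show "board (ns @ [k]) \<subseteq> (\<Union>t\<in>{1..k}. lift t ` board ns)"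
  proof
    fix b assume b: "b \<in> board (ns @ [k])"
    then have "b \<noteq> []" by (auto simp: board_def)
    then have "b = butlast b @ [last b]" by simp
    then have "butlast b \<in> board ns" "last b \<in> {1..int k}" "b = lift (nat (last b)) (butlast b)"
      using b board_snoc_iff by (metis atLeastAtMost_iff lift_def int_nat_eq order_trans zero_le_one)+
    then show "b \<in> (\<Union>t\<in>{1..k}. lift t ` board ns)"
      by (intro UN_I[of "nat (last b)"]) auto
  qed
qed (auto simp: lift_def board_snoc_iff)

lemma adj_lift:
  assumes "adj \<alpha> \<beta> ns a b" "t \<in> {1..k}"
  shows "adj \<alpha> \<beta> (ns @ [k]) (lift t a) (lift t b)"
  using assms unfolding adj_def lift_def
  by (auto simp: board_snoc_iff vdiff_snoc board_length intro!: in_C_snoc_0)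

text \<open>\<open>lift t0 x - lift t z\<close> has the entry \<open>\<plusminus>g\<close> in one old coordinate and \<open>t0 - t\<close> in the new one.\<close>
lemma adj_lift_site_quad:
  assumes "site_quad g x y z w" "{x, y, z, w} \<subseteq> board ns" and "t0 \<in> {1..k}" "t \<in> {1..k}"
    and "g = \<alpha> \<and> \<bar>int t0 - int t\<bar> = int \<beta> \<or> g = \<beta> \<and> \<bar>int t0 - int t\<bar> = int \<alpha>"
  shows "adj \<alpha> \<beta> (ns @ [k]) (lift t0 x) (lift t z)" "adj \<alpha> \<beta> (ns @ [k]) (lift t0 y) (lift t w)"
proof -
  have len: "length x = length ns" "length y = length ns" "length z = length ns" "length w = length ns"
    using assms(2) by (simp_all add: board_length)
  have "in_C \<alpha> \<beta> (Suc (length ns)) (vdiff x z @ [int t0 - int t])"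
    "in_C \<alpha> \<beta> (Suc (length ns)) (vdiff y w @ [int t0 - int t])"
    using site_quad_facing_axis_mult[OF assms(1)] len assms(5)
    by (auto intro: in_C_snoc_axis_mult)
  then show "adj \<alpha> \<beta> (ns @ [k]) (lift t0 x) (lift t z)" "adj \<alpha> \<beta> (ns @ [k]) (lift t0 y) (lift t w)"
    using assms(2-4) len unfolding adj_def lift_def by (auto simp: board_snoc_iff vdiff_snoc)
qed

lemma good_ham_cycleI:
  assumes "ham_cycle \<alpha> \<beta> ns cs"
    and "is_site \<alpha> cs s1" "is_site \<alpha> cs s2" "is_site \<beta> cs s3" "is_site \<beta> cs s4"
    and "disjoint4 (site_support cs s1) (site_support cs s2) (site_support cs s3) (site_support cs s4)"
  shows "good_ham_cycle \<alpha> \<beta> ns cs"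
proof -
  have "let S = [site_support cs s1, site_support cs s2, site_support cs s3, site_support cs s4]
        in \<forall>i<4. \<forall>j<4. i \<noteq> j \<longrightarrow> S ! i \<inter> S ! j = {}"
    using assms(6) by (simp only: disjoint4_iff_nth)
  then show ?thesis unfolding good_ham_cycle_def using assms(1-5) by blast
qed

lemma disjoint4_lift:
  "disjoint4 A B C D \<Longrightarrow> disjoint4 (lift s ` A) (lift s ` B) (lift s ` C) (lift s ` D)"
  by (auto simp: disjoint4_def)

lemma disjoint4_two_layers:
  "s \<noteq> t \<Longrightarrow> A \<inter> B = {} \<Longrightarrow> disjoint4 (lift s ` A) (lift t ` A) (lift s ` B) (lift t ` B)"
  by (auto simp: disjoint4_def)

locale layer_construction =
  fixes \<alpha> \<beta> k :: nat and ns :: "nat list" and cs :: "int list list"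
    and xA yA zA wA xB yB zB wB :: "int list"
  assumes pos: "\<alpha> > 0" "\<beta> > 0"
    and ham: "ham_cycle \<alpha> \<beta> ns cs"
    and site_A: "cycle_site \<alpha> cs xA yA zA wA"
    and site_B: "cycle_site \<beta> cs xB yB zB wB"
    and disjoint_AB: "{xA, yA, zA, wA} \<inter> {xB, yB, zB, wB} = {}"
begin

abbreviation adj' :: "int list \<Rightarrow> int list \<Rightarrow> bool" where
  "adj' \<equiv> adj \<alpha> \<beta> (ns @ [k])"

definition layer_cycle :: "nat \<Rightarrow> int list list" where
  "layer_cycle t = map (lift t) cs"

text \<open>The edge of layer \<open>s\<close> that is given up when layer \<open>s\<close> is joined to layer \<open>t\<close>: the \<open>\<alpha>\<close>-site
  \<open>A\<close> joins layers at distance \<open>\<beta>\<close>, the \<open>\<beta>\<close>-site \<open>B\<close> layers at distance \<open>\<alpha>\<close> (unused if \<open>\<alpha> = \<beta>\<close>).\<close>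
definition merge_edge :: "nat \<Rightarrow> nat \<Rightarrow> int list set" where
  "merge_edge s t =
    (if t = s + \<beta> then {xA, yA} else if s = t + \<beta> then {zA, wA}
     else if t = s + \<alpha> then {xB, yB} else if s = t + \<alpha> then {zB, wB} else {})"

text \<open>Invariant of the merging of the layer copies of \<open>cs\<close> along a spanning tree of \<open>T\<close>.\<close>
definition spans_layers :: "nat set \<Rightarrow> int list list \<Rightarrow> bool" where
  "spans_layers T C \<longleftrightarrow> set C = (\<Union>t\<in>T. lift t ` set cs) \<and> distinct C \<and> 3 \<le> length C \<and>
    (\<forall>a b. {a, b} \<in> cycle_edges C \<longrightarrow> adj' a b) \<and>
    (\<forall>s\<in>T. \<forall>e\<in>cycle_edges cs. e \<notin> merge_edge s ` T \<longrightarrow> lift s ` e \<in> cycle_edges C)"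

lemma cs_nonempty: "cs \<noteq> []"
  using ham_cycle_nonempty[OF ham] .

lemma cs_board: "set cs = board ns"
  using ham by (simp add: ham_cycle_def)

lemma cycle_edge_cs_adj: "{a, b} \<in> cycle_edges cs \<Longrightarrow> adj \<alpha> \<beta> ns a b"
  using ham_cycle_adj_cyc[OF ham] adj_sym
  by (auto simp: cycle_edges_iff_cyc[OF cs_nonempty] doubleton_eq_iff)

lemma cycle_edge_cs_nonempty: "e \<in> cycle_edges cs \<Longrightarrow> e \<noteq> {}"
  by (auto simp: cycle_edges_iff_cyc[OF cs_nonempty])

lemma cycle_edges_layer_cycle: "cycle_edges (layer_cycle t) = (\<lambda>e. lift t ` e) ` cycle_edges cs"
  by (simp add: layer_cycle_def cycle_edges_map[OF cs_nonempty])

lemma cycle_edge_layer_cycle_adj: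
  assumes "t \<in> {1..k}" "{a, b} \<in> cycle_edges (layer_cycle t)"
  shows "adj' a b"
proof -
  obtain i where "{a, b} = {lift t (cyc cs i), lift t (cyc cs (Suc i))}"
    using assms(2) by (auto simp: cycle_edges_layer_cycle cycle_edges_iff_cyc[OF cs_nonempty])
  moreover have "adj' (lift t (cyc cs i)) (lift t (cyc cs (Suc i)))"
    using adj_lift[OF ham_cycle_adj_cyc[OF ham] assms(1)] .
  ultimately show ?thesis using adj_sym by (auto simp: doubleton_eq_iff)
qed

lemma layer_cycle:
  "set (layer_cycle t) = lift t ` set cs" "distinct (layer_cycle t)" "3 \<le> length (layer_cycle t)"
  using ham by (auto simp: layer_cycle_def ham_cycle_def distinct_map inj_on_def)

lemma spans_layers_single:
  assumes "t \<in> {1..k}"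
  shows "spans_layers {t} (layer_cycle t)"
  unfolding spans_layers_def using layer_cycle cycle_edge_layer_cycle_adj[OF assms]
  by (auto simp: cycle_edges_layer_cycle)

lemma cycle_site_in_board: "cycle_site g cs x y z w \<Longrightarrow> {x, y, z, w} \<subseteq> board ns"
  using cycle_edge_in_set[OF cs_nonempty] cs_board by (auto simp: cycle_site_def)

lemma cycle_site_edges_distinct:
  assumes "g > 0" "cycle_site g cs x y z w"
  shows "{x, y} \<noteq> {z, w}"
proof -
  have "in_C \<alpha> \<beta> (length ns) (vdiff x y)"
    using assms(2) cycle_edge_cs_adj by (auto simp: cycle_site_def adj_def)
  then show ?thesis
    using site_quad_edges_distinct[OF pos assms(1)] assms(2) cycle_site_in_board[OF assms(2)]
    by (auto simp: cycle_site_def board_length)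
qed

lemma merge_edge_inj:
  assumes "merge_edge s t \<noteq> {}" "merge_edge s t = merge_edge s t'"
  shows "t = t'"
  using assms cycle_site_edges_distinct[OF pos(1) site_A] cycle_site_edges_distinct[OF pos(2) site_B]
    disjoint_AB
  unfolding merge_edge_def by (auto split: if_splits simp: doubleton_eq_iff)

lemma merge_edges_join_upward:
  assumes "t0 \<in> {1..k}" "t \<in> {1..k}" "t = t0 + \<beta> \<or> t = t0 + \<alpha>"
  shows "\<exists>p q u v. merge_edge t0 t = {p, q} \<and> merge_edge t t0 = {u, v} \<and>
    {p, q} \<in> cycle_edges cs \<and> {u, v} \<in> cycle_edges cs \<and> adj' (lift t0 p) (lift t u) \<and> adj' (lift t0 q) (lift t v)"
proof (cases "t = t0 + \<beta>")
  case True
  then have "merge_edge t0 t = {xA, yA}" "merge_edge t t0 = {zA, wA}"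
    using pos by (auto simp: merge_edge_def)
  moreover have "adj' (lift t0 xA) (lift t zA)" "adj' (lift t0 yA) (lift t wA)"
    using adj_lift_site_quad[OF _ cycle_site_in_board[OF site_A] assms(1,2), where \<alpha> = \<alpha> and \<beta> = \<beta>]
      site_A True
    by (auto simp: cycle_site_def)
  ultimately show ?thesis using site_A unfolding cycle_site_def by blast
next
  case False
  then have "merge_edge t0 t = {xB, yB}" "merge_edge t t0 = {zB, wB}"
    using pos assms(3) by (auto simp: merge_edge_def)
  moreover have "adj' (lift t0 xB) (lift t zB)" "adj' (lift t0 yB) (lift t wB)"
    using adj_lift_site_quad[OF _ cycle_site_in_board[OF site_B] assms(1,2), where \<alpha> = \<alpha> and \<beta> = \<beta>]
      site_B False assms(3)
    by (auto simp: cycle_site_def)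
  ultimately show ?thesis using site_B unfolding cycle_site_def by blast
qed

lemma merge_edges_join:
  assumes "t0 \<in> {1..k}" "t \<in> {1..k}" "\<bar>int t - int t0\<bar> \<in> {int \<alpha>, int \<beta>}"
  shows "\<exists>p q u v. merge_edge t0 t = {p, q} \<and> merge_edge t t0 = {u, v} \<and>
    {p, q} \<in> cycle_edges cs \<and> {u, v} \<in> cycle_edges cs \<and> adj' (lift t0 p) (lift t u) \<and> adj' (lift t0 q) (lift t v)"
proof (cases "t0 < t")
  case True
  then have "t = t0 + \<beta> \<or> t = t0 + \<alpha>" using assms(3) by auto
  then show ?thesis using merge_edges_join_upward[OF assms(1,2)] by blast
next
  case False
  then have "t0 = t + \<beta> \<or> t0 = t + \<alpha>" using assms(3) by auto
  then obtain p q u v where edges: "merge_edge t t0 = {p, q}" "merge_edge t0 t = {u, v}"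
    "{p, q} \<in> cycle_edges cs" "{u, v} \<in> cycle_edges cs"
    and "adj' (lift t p) (lift t0 u)" "adj' (lift t q) (lift t0 v)"
    using merge_edges_join_upward[OF assms(2,1)] by blast
  then have "adj' (lift t0 u) (lift t p)" "adj' (lift t0 v) (lift t q)" by (simp_all add: adj_sym)
  with edges show ?thesis by blast
qed

lemma lift_edge_not_merged:
  assumes "e \<in> cycle_edges cs" "e \<notin> merge_edge s ` insert t T" "t0 \<in> T"
  shows "lift s ` e \<noteq> lift t0 ` merge_edge t0 t" "lift s ` e \<noteq> lift t ` merge_edge t t0"
proof -
  note eq_iff = lift_image_eq_iff[OF cycle_edge_cs_nonempty[OF assms(1)]]
  show "lift s ` e \<noteq> lift t0 ` merge_edge t0 t"
  proof
    assume "lift s ` e = lift t0 ` merge_edge t0 t"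
    then have "e = merge_edge s t" using eq_iff by simp
    then show False using assms(2) by simp
  qed
  show "lift s ` e \<noteq> lift t ` merge_edge t t0"
  proof
    assume "lift s ` e = lift t ` merge_edge t t0"
    then have "e = merge_edge s t0" using eq_iff by simp
    then show False using assms(2,3) by simp
  qed
qed

lemma spans_layers_insert:
  assumes span: "spans_layers T C" and T: "T \<subseteq> {1..k}" and t0: "t0 \<in> T"
    and t: "t \<notin> T" "t \<in> {1..k}" and dist: "\<bar>int t - int t0\<bar> \<in> {int \<alpha>, int \<beta>}"
  shows "\<exists>C'. spans_layers (insert t T) C'"
proof -
  obtain p q u v where join: "merge_edge t0 t = {p, q}" "merge_edge t t0 = {u, v}"
    "{p, q} \<in> cycle_edges cs" "{u, v} \<in> cycle_edges cs"
    "adj' (lift t0 p) (lift t u)" "adj' (lift t0 q) (lift t v)"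
    using merge_edges_join[OF _ t(2) dist] T t0 by blast
  have C: "set C = (\<Union>t\<in>T. lift t ` set cs)" "distinct C" "3 \<le> length C"
    "\<And>a b. {a, b} \<in> cycle_edges C \<Longrightarrow> adj' a b"
    "\<And>s e. s \<in> T \<Longrightarrow> e \<in> cycle_edges cs \<Longrightarrow> e \<notin> merge_edge s ` T \<Longrightarrow> lift s ` e \<in> cycle_edges C"
    using span unfolding spans_layers_def by blast+
  then have "C \<noteq> []" by auto
  have "merge_edge t0 t \<notin> merge_edge t0 ` T"
    using merge_edge_inj[of t0 t] join(1) t(1) by auto
  then have edge_C: "{lift t0 p, lift t0 q} \<in> cycle_edges C"
    using C(5)[OF t0 join(3)] join(1) by simp
  have "lift t ` {u, v} \<in> cycle_edges (layer_cycle t)"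
    unfolding cycle_edges_layer_cycle using join(4) by (rule imageI)
  then have edge_L: "{lift t u, lift t v} \<in> cycle_edges (layer_cycle t)" by simp
  have "layer_cycle t \<noteq> []" using layer_cycle(3)[of t] by auto
  obtain C' where C': "set C' = set C \<union> set (layer_cycle t)"
    "length C' = length C + length (layer_cycle t)"
    "distinct C' \<longleftrightarrow> distinct C \<and> distinct (layer_cycle t) \<and> set C \<inter> set (layer_cycle t) = {}"
    "\<And>a b. {a, b} \<in> cycle_edges C' \<Longrightarrow> adj' a b"
    "cycle_edges C \<union> cycle_edges (layer_cycle t) - {{lift t0 p, lift t0 q}, {lift t u, lift t v}}
       \<subseteq> cycle_edges C'"
    using cycle_merge[OF adj_sym \<open>C \<noteq> []\<close> \<open>layer_cycle t \<noteq> []\<close> edge_C edge_L join(5,6) C(4)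
        cycle_edge_layer_cycle_adj[OF t(2)]]
    by blast
  have "lift s ` e \<in> cycle_edges C'"
    if "s \<in> insert t T" "e \<in> cycle_edges cs" "e \<notin> merge_edge s ` insert t T" for s e
  proof -
    have "lift s ` e \<in> cycle_edges C \<union> cycle_edges (layer_cycle t)"
      using that C(5) by (auto simp: cycle_edges_layer_cycle)
    moreover have "lift s ` e \<notin> {{lift t0 p, lift t0 q}, {lift t u, lift t v}}"
      using lift_edge_not_merged[OF that(2,3) t0] join(1,2) by simp
    ultimately show ?thesis using C'(5) by (meson DiffI subsetD)
  qed
  moreover have "set C \<inter> set (layer_cycle t) = {}" using C(1) layer_cycle(1) t(1) by auto
  ultimately have "spans_layers (insert t T) C'"
    unfolding spans_layers_def using C C' layer_cycle by auto
  then show ?thesis by blast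
qed

lemma spans_layers_of_buildable: "layer_buildable \<alpha> \<beta> k T \<Longrightarrow> \<exists>C. spans_layers T C"
proof (induction rule: layer_buildable.induct)
  case (single t)
  then show ?case using spans_layers_single by blast
next
  case (insert T t0 t)
  then show ?case using spans_layers_insert layer_buildable_subset by blast
qed

lemma spans_layers_ham_cycle:
  assumes "spans_layers {1..k} C"
  shows "ham_cycle \<alpha> \<beta> (ns @ [k]) C"
  unfolding ham_cycle_def
proof (intro conjI allI impI)
  show "3 \<le> length C" "distinct C" "set C = board (ns @ [k])"
    using assms by (simp_all add: spans_layers_def board_snoc cs_board)
  fix i assume "i < length C"
  moreover have "C \<noteq> []" using \<open>3 \<le> length C\<close> by auto
  ultimately have "{cyc C i, cyc C (Suc i)} \<in> cycle_edges C"
    using cycle_edges_iff_cyc by blast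
  then show "adj' (cyc C i) (cyc C (Suc i))"
    using assms by (simp add: spans_layers_def)
qed

lemma spans_layers_site:
  assumes span: "spans_layers T C" and s: "s \<in> T" and site: "cycle_site g cs x y z w"
    and kept: "{x, y} \<notin> merge_edge s ` T" "{z, w} \<notin> merge_edge s ` T"
  shows "\<exists>st. is_site g C st \<and> site_support C st = lift s ` {x, y, z, w}"
proof -
  have C: "set C = (\<Union>t\<in>T. lift t ` set cs)" "3 \<le> length C"
    "\<And>e. e \<in> cycle_edges cs \<Longrightarrow> e \<notin> merge_edge s ` T \<Longrightarrow> lift s ` e \<in> cycle_edges C"
    using span s unfolding spans_layers_def by blast+
  have "length x = length ns" "length y = length ns" "length z = length ns" "length w = length ns"
    using cycle_site_in_board[OF site] by (simp_all add: board_length)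
  then have "site_quad g (lift s x) (lift s y) (lift s z) (lift s w)"
    using site unfolding cycle_site_def lift_def by (simp add: site_quad_snoc)
  moreover have "lift s ` {x, y} \<in> cycle_edges C" "lift s ` {z, w} \<in> cycle_edges C"
    using site C(3) kept unfolding cycle_site_def by blast+
  ultimately have "cycle_site g C (lift s x) (lift s y) (lift s z) (lift s w)"
    by (simp add: cycle_site_def)
  moreover have "\<forall>a\<in>set C. length a = Suc (length ns)"
    using C(1) ham_cycle_lengths[OF ham] by auto
  moreover have "C \<noteq> []" using C(2) by auto
  ultimately have "\<exists>st. is_site g C st \<and> site_support C st = {lift s x, lift s y, lift s z, lift s w}"
    by (rule is_site_of_cycle_site)
  then show ?thesis by simp
qed

lemma merge_edge_subset: "merge_edge s t \<subseteq> {xA, yA, zA, wA} \<union> {xB, yB, zB, wB}"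
  by (auto simp: merge_edge_def)

text \<open>Only edges of the sites \<open>A\<close> and \<open>B\<close> are given up, and none at all if \<open>k = 1\<close>.\<close>
lemma spans_all_layers_site:
  assumes span: "spans_layers {1..k} C" and s: "s \<in> {1..k}" and site: "cycle_site g cs x y z w"
    and away: "{x, y, z, w} \<inter> ({xA, yA, zA, wA} \<union> {xB, yB, zB, wB}) = {} \<or> k = 1"
  obtains st where "is_site g C st" "site_support C st = lift s ` {x, y, z, w}"
proof -
  have "{x, y} \<notin> merge_edge s ` {1..k} \<and> {z, w} \<notin> merge_edge s ` {1..k}"
    using away
  proof
    assume "{x, y, z, w} \<inter> ({xA, yA, zA, wA} \<union> {xB, yB, zB, wB}) = {}"
    then have "a \<notin> merge_edge s t" if "a \<in> {x, y, z, w}" for a t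
      using that merge_edge_subset[of s t] by auto
    then show ?thesis by auto
  next
    assume "k = 1"
    then have "merge_edge s ` {1..k} = {{}}" using s pos by (simp add: merge_edge_def)
    then show ?thesis by simp
  qed
  then show thesis using spans_layers_site[OF span s site] that by blast
qed

lemma good_ham_cycle_single_layer:
  assumes span: "spans_layers {1..k} C" and "k = 1"
    and site_A': "cycle_site \<alpha> cs xA' yA' zA' wA'" and site_B': "cycle_site \<beta> cs xB' yB' zB' wB'"
    and disj: "disjoint4 {xA, yA, zA, wA} {xA', yA', zA', wA'} {xB, yB, zB, wB} {xB', yB', zB', wB'}"
  shows "good_ham_cycle \<alpha> \<beta> (ns @ [k]) C"
proof -
  have "1 \<in> {1..k}" using \<open>k = 1\<close> by simp
  note site_in = spans_all_layers_site[OF span \<open>1 \<in> {1..k}\<close> _ disjI2[OF \<open>k = 1\<close>]]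
  obtain s1 where s1: "is_site \<alpha> C s1" "site_support C s1 = lift 1 ` {xA, yA, zA, wA}"
    using site_in[OF site_A] by blast
  obtain s2 where s2: "is_site \<alpha> C s2" "site_support C s2 = lift 1 ` {xA', yA', zA', wA'}"
    using site_in[OF site_A'] by blast
  obtain s3 where s3: "is_site \<beta> C s3" "site_support C s3 = lift 1 ` {xB, yB, zB, wB}"
    using site_in[OF site_B] by blast
  obtain s4 where s4: "is_site \<beta> C s4" "site_support C s4 = lift 1 ` {xB', yB', zB', wB'}"
    using site_in[OF site_B'] by blast
  show ?thesis
    using good_ham_cycleI[OF spans_layers_ham_cycle[OF span] s1(1) s2(1) s3(1) s4(1)]
      disjoint4_lift[OF disj, of 1] unfolding s1(2) s2(2) s3(2) s4(2) by blast
qed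

lemma good_ham_cycle_two_layers:
  assumes span: "spans_layers {1..k} C" and "k \<ge> 2"
    and site_A': "cycle_site \<alpha> cs xA' yA' zA' wA'" and site_B': "cycle_site \<beta> cs xB' yB' zB' wB'"
    and disj: "disjoint4 {xA, yA, zA, wA} {xA', yA', zA', wA'} {xB, yB, zB, wB} {xB', yB', zB', wB'}"
  shows "good_ham_cycle \<alpha> \<beta> (ns @ [k]) C"
proof -
  have away: "{xA', yA', zA', wA'} \<inter> ({xA, yA, zA, wA} \<union> {xB, yB, zB, wB}) = {}"
    "{xB', yB', zB', wB'} \<inter> ({xA, yA, zA, wA} \<union> {xB, yB, zB, wB}) = {}"
    using disj by (auto simp: disjoint4_def)
  have layers: "1 \<in> {1..k}" "2 \<in> {1..k}" using \<open>k \<ge> 2\<close> by auto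
  note site_in = spans_all_layers_site[OF span]
  obtain s1 where s1: "is_site \<alpha> C s1" "site_support C s1 = lift 1 ` {xA', yA', zA', wA'}"
    using site_in[OF layers(1) site_A' disjI1[OF away(1)]] by blast
  obtain s2 where s2: "is_site \<alpha> C s2" "site_support C s2 = lift 2 ` {xA', yA', zA', wA'}"
    using site_in[OF layers(2) site_A' disjI1[OF away(1)]] by blast
  obtain s3 where s3: "is_site \<beta> C s3" "site_support C s3 = lift 1 ` {xB', yB', zB', wB'}"
    using site_in[OF layers(1) site_B' disjI1[OF away(2)]] by blast
  obtain s4 where s4: "is_site \<beta> C s4" "site_support C s4 = lift 2 ` {xB', yB', zB', wB'}"
    using site_in[OF layers(2) site_B' disjI1[OF away(2)]] by blast
  have "{xA', yA', zA', wA'} \<inter> {xB', yB', zB', wB'} = {}"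
    using disj by (simp add: disjoint4_def)
  then have "disjoint4 (site_support C s1) (site_support C s2) (site_support C s3) (site_support C s4)"
    unfolding s1(2) s2(2) s3(2) s4(2) by (rule disjoint4_two_layers[rotated]) simp
  then show ?thesis
    using good_ham_cycleI[OF spans_layers_ham_cycle[OF span] s1(1) s2(1) s3(1) s4(1)] by blast
qed

lemma good_ham_cycle_extension:
  assumes "cycle_site \<alpha> cs xA' yA' zA' wA'" "cycle_site \<beta> cs xB' yB' zB' wB'"
    and "disjoint4 {xA, yA, zA, wA} {xA', yA', zA', wA'} {xB, yB, zB, wB} {xB', yB', zB', wB'}"
    and "coprime \<alpha> \<beta>" "\<alpha> + \<beta> - 1 \<le> k"
  shows "\<exists>C. good_ham_cycle \<alpha> \<beta> (ns @ [k]) C"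
proof -
  obtain C where span: "spans_layers {1..k} C"
    using spans_layers_of_buildable layer_buildable_interval[OF pos assms(4,5)] by blast
  have "k = 1 \<or> k \<ge> 2" using assms(5) pos by linarith
  then show ?thesis
    using good_ham_cycle_single_layer[OF span _ assms(1-3)] good_ham_cycle_two_layers[OF span _ assms(1-3)]
    by blast
qed

end

theorem proposition5p4:
  fixes \<alpha> \<beta> k :: nat and ns :: "nat list"
  assumes "\<alpha> > 0" and "\<beta> > 0"
    and "\<forall>i<length ns. ns ! i > 0"
    and "\<exists>cs. good_ham_cycle \<alpha> \<beta> ns cs"
    and "int k \<ge> int \<alpha> + int \<beta> - 1"
  shows "\<exists>cs. good_ham_cycle \<alpha> \<beta> (ns @ [k]) cs"
proof -
  obtain cs where good: "good_ham_cycle \<alpha> \<beta> ns cs" using assms(4) by blast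
  then have ham: "ham_cycle \<alpha> \<beta> ns cs" by (simp add: good_ham_cycle_def)
  obtain xA yA zA wA xA' yA' zA' wA' xB yB zB wB xB' yB' zB' wB' where
    sites: "cycle_site \<alpha> cs xA yA zA wA" "cycle_site \<alpha> cs xA' yA' zA' wA'"
      "cycle_site \<beta> cs xB yB zB wB" "cycle_site \<beta> cs xB' yB' zB' wB'"
    and disj: "disjoint4 {xA, yA, zA, wA} {xA', yA', zA', wA'} {xB, yB, zB, wB} {xB', yB', zB', wB'}"
    using good good_ham_cycle_iff_cycle_sites[OF ham] by blast
  have "{xA, yA, zA, wA} \<inter> {xB, yB, zB, wB} = {}"
    using disj by (simp only: disjoint4_def)
  then interpret layer_construction \<alpha> \<beta> k ns cs xA yA zA wA xB yB zB wB
    using assms(1,2) ham sites(1,3) by unfold_locales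
  have "\<alpha> + \<beta> - 1 \<le> k" using assms(5) by linarith
  then show ?thesis
    using good_ham_cycle_extension[OF sites(2,4) disj ham_cycle_coprime[OF ham assms(3)]] by blast
qed

end
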